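(* Let $\beta=(\beta_n)_{n\ge0}$ be an essentially decreasing sequence of positive numbers with $\liminf_n\beta_n^{1/n}\ge1$, and assume that for some $a\in(0,1)$ the map $T_a$ induces a bounded composition operator on $H^2(\beta)$. Then $\beta$ satisfies the $\Delta_2$-condition.
   Context: $H^2(\beta)$ is the Hilbert space of analytic functions $f(z)=\sum_{n\ge0}a_nz^n$ on the unit disk $\mathbb D$ with $\|f\|^2=\sum_{n\ge0}|a_n|^2\beta_n<\infty$. $T_a(z)=\frac{a+z}{1+\bar a z}$ and $C_{T_a}f=f\circ T_a$. $\beta$ is essentially decreasing if there is $C\ge1$ with $\beta_m\le C\beta_n$ for all $m\ge n\ge0$. $\beta$ satisfies the $\Delta_2$-condition if there is $\delta\in(0,1)$ with $\beta_{2n}\ge\delta\beta_n$ for all $n\ge0$. *)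

theory Defs
  imports "HOL-Analysis.Analysis"
begin

text \<open>Elements of H^2(beta) are represented by their Taylor coefficient sequences
  c :: nat => complex; the associated function is z |-> sum_n c n * z^n on the unit disk.\<close>

definition in_H2 :: "(nat \<Rightarrow> real) \<Rightarrow> (nat \<Rightarrow> complex) \<Rightarrow> bool" where
  "in_H2 \<beta> c \<longleftrightarrow> summable (\<lambda>n. (norm (c n))\<^sup>2 * \<beta> n)"

definition H2_norm :: "(nat \<Rightarrow> real) \<Rightarrow> (nat \<Rightarrow> complex) \<Rightarrow> real" where
  "H2_norm \<beta> c = sqrt (\<Sum>n. (norm (c n))\<^sup>2 * \<beta> n)"

definition power_fun :: "(nat \<Rightarrow> complex) \<Rightarrow> complex \<Rightarrow> complex" where
  "power_fun c z = (\<Sum>n. c n * z ^ n)"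

definition taylor_coeffs :: "(complex \<Rightarrow> complex) \<Rightarrow> nat \<Rightarrow> complex" where
  "taylor_coeffs g n = (deriv ^^ n) g 0 / of_nat (fact n)"

definition T :: "complex \<Rightarrow> complex \<Rightarrow> complex" where
  "T a z = (a + z) / (1 + cnj a * z)"

definition comp_op :: "complex \<Rightarrow> (nat \<Rightarrow> complex) \<Rightarrow> nat \<Rightarrow> complex" where
  "comp_op a c = taylor_coeffs (power_fun c \<circ> T a)"

definition bounded_comp_op :: "(nat \<Rightarrow> real) \<Rightarrow> complex \<Rightarrow> bool" where
  "bounded_comp_op \<beta> a \<longleftrightarrow>
     (\<exists>M. \<forall>c. in_H2 \<beta> c \<longrightarrow>
        in_H2 \<beta> (comp_op a c) \<and> H2_norm \<beta> (comp_op a c) \<le> M * H2_norm \<beta> c)"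

definition ess_decreasing :: "(nat \<Rightarrow> real) \<Rightarrow> bool" where
  "ess_decreasing \<beta> \<longleftrightarrow> (\<exists>C\<ge>1. \<forall>m n. n \<le> m \<longrightarrow> \<beta> m \<le> C * \<beta> n)"

definition Delta2 :: "(nat \<Rightarrow> real) \<Rightarrow> bool" where
  "Delta2 \<beta> \<longleftrightarrow> (\<exists>\<delta>. 0 < \<delta> \<and> \<delta> < 1 \<and> (\<forall>n. \<beta> (2 * n) \<ge> \<delta> * \<beta> n))"

end

theory Submission
  imports Defs "HOL-Complex_Analysis.Complex_Analysis"
begin

text \<open>For \<open>0 \<le> t < 1\<close>, \<open>\<Phi>(t) = \<Sum>\<^sub>k t\<^sup>2\<^sup>k / \<beta>\<^sub>k\<close> is the squared norm of the reproducing
  kernel of \<open>H\<^sup>2(\<beta>)\<close> at \<open>t\<close>. Testing \<open>C\<^sub>T\<^sub>a\<close> against truncated kernels gives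
  \<open>\<Phi>(T\<^sub>a t) \<le> M\<^sup>2 \<Phi>(t)\<close>; since \<open>1 - T\<^sub>a t \<le> (1 - a)(1 - t)\<close>, iterating \<open>T\<^sub>a\<close> \<open>j\<close> times gives
  \<open>\<Phi>(1 - \<rho>(1 - t)) \<le> Q \<Phi>(t)\<close> with \<open>\<rho> = (1 - a)\<^sup>j\<close> and \<open>Q = M\<^sup>2\<^sup>j\<close>, where \<open>\<rho> ln Q\<close> is
  small for large \<open>j\<close>. Let \<open>C\<close> be the constant of essential decrease, \<open>L = ln (2Q)\<close>,
  \<open>t = 1 - L/n\<close> and \<open>y = 1 - \<rho>L/n\<close>. The block \<open>2n \<le> k < 4n\<close> gives
  \<open>\<Phi>(y) \<ge> n / (C \<beta>\<^sub>2\<^sub>n)\<close>; the terms of \<open>\<Phi>(t)\<close> with \<open>k \<ge> n\<close> are at most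
  \<open>(t/y)\<^sup>2\<^sup>n \<Phi>(y) \<le> \<Phi>(y) / (2Q) \<le> \<Phi>(t) / 2\<close>, so \<open>\<Phi>(t) \<le> 2nC / \<beta>\<^sub>n\<close>.
  Comparing the two bounds gives \<open>\<beta>\<^sub>n \<le> 2QC\<^sup>2 \<beta>\<^sub>2\<^sub>n\<close> for all large \<open>n\<close>.\<close>

definition H2_kernel :: "(nat \<Rightarrow> real) \<Rightarrow> real \<Rightarrow> real" where
  "H2_kernel \<beta> t = (\<Sum>k. t ^ (2*k) / \<beta> k)"

lemma summable_H2_kernel:
  fixes \<beta> :: "nat \<Rightarrow> real"
  assumes pos: "\<And>n. \<beta> n > 0"
    and lim: "liminf (\<lambda>n. ereal (root n (\<beta> n))) \<ge> 1"
    and t: "0 \<le> t" "t < 1"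
  shows "summable (\<lambda>k. t ^ (2*k) / \<beta> k)"
proof -
  have "ereal t < 1" using t by simp
  with lim obtain N where N: "\<And>n. n \<ge> N \<Longrightarrow> ereal t < ereal (root n (\<beta> n))"
    unfolding liminf_bounded_iff by blast
  have "norm (t ^ (2*k) / \<beta> k) \<le> t ^ k" if k: "k \<ge> max N 1" for k
  proof -
    have "t ^ k < root k (\<beta> k) ^ k" using N[of k] k t by (intro power_strict_mono) auto
    also have "\<dots> = \<beta> k" using k pos[of k] by (simp add: real_root_pow_pos2 less_imp_le)
    finally have "t ^ k < \<beta> k" .
    have "t ^ (2*k) / \<beta> k = t ^ k * (t ^ k / \<beta> k)" by (simp add: mult_2 power_add)
    also have "\<dots> \<le> t ^ k * 1" using \<open>t ^ k < \<beta> k\<close> pos[of k] t by (intro mult_left_mono) auto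
    finally show ?thesis using t pos[of k] by simp
  qed
  hence "eventually (\<lambda>k. norm (t ^ (2*k) / \<beta> k) \<le> t ^ k) sequentially"
    unfolding eventually_at_top_linorder by blast
  thus ?thesis
    by (rule summable_comparison_test_ev) (use t in simp)
qed

lemma H2_kernel_nonneg:
  fixes \<beta> :: "nat \<Rightarrow> real"
  assumes pos: "\<And>n. \<beta> n > 0"
    and lim: "liminf (\<lambda>n. ereal (root n (\<beta> n))) \<ge> 1"
    and t: "0 \<le> t" "t < 1"
  shows "0 \<le> H2_kernel \<beta> t"
  unfolding H2_kernel_def using pos t
  by (intro suminf_nonneg[OF summable_H2_kernel[OF pos lim t]]) (simp add: less_imp_le)

lemma H2_kernel_mono:
  fixes \<beta> :: "nat \<Rightarrow> real"
  assumes pos: "\<And>n. \<beta> n > 0"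
    and lim: "liminf (\<lambda>n. ereal (root n (\<beta> n))) \<ge> 1"
    and "0 \<le> s" "s \<le> t" "t < 1"
  shows "H2_kernel \<beta> s \<le> H2_kernel \<beta> t"
  unfolding H2_kernel_def
proof (rule suminf_le)
  fix k show "s ^ (2*k) / \<beta> k \<le> t ^ (2*k) / \<beta> k"
    using assms by (intro divide_right_mono power_mono) (auto simp: less_imp_le)
qed (use summable_H2_kernel[OF pos lim] assms in auto)

lemma H2_norm_sum_nonneg:
  assumes pos: "\<And>n. \<beta> n > 0" and c: "in_H2 \<beta> c"
  shows "0 \<le> (\<Sum>n. (norm (c n))\<^sup>2 * \<beta> n)"
  using c pos unfolding in_H2_def by (intro suminf_nonneg) (auto simp: less_imp_le)

lemma H2_norm_nonneg:
  assumes pos: "\<And>n. \<beta> n > 0" and c: "in_H2 \<beta> c"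
  shows "0 \<le> H2_norm \<beta> c"
  using H2_norm_sum_nonneg[OF assms] unfolding H2_norm_def by simp

lemma H2_norm_square:
  assumes pos: "\<And>n. \<beta> n > 0" and c: "in_H2 \<beta> c"
  shows "(H2_norm \<beta> c)\<^sup>2 = (\<Sum>n. (norm (c n))\<^sup>2 * \<beta> n)"
  using H2_norm_sum_nonneg[OF assms] unfolding H2_norm_def by simp

lemma mult_le_scaled_squares:
  fixes p q x :: real
  assumes "x > 0"
  shows "p * q \<le> (x * p\<^sup>2 + q\<^sup>2 / x) / 2"
proof -
  have "0 \<le> (x * p - q)\<^sup>2" by simp
  hence "2 * x * p * q \<le> x\<^sup>2 * p\<^sup>2 + q\<^sup>2" by (simp add: power2_eq_square algebra_simps)
  thus ?thesis using assms by (simp add: field_simps power2_eq_square)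
qed

text \<open>The weighted form of the Cauchy--Schwarz bound \<open>|f(t)|\<^sup>2 \<le> \<parallel>f\<parallel>\<^sup>2 \<Phi>(t)\<close> for point
  evaluation; it avoids square roots.\<close>

lemma norm_point_eval_le:
  fixes \<beta> :: "nat \<Rightarrow> real" and g :: "nat \<Rightarrow> complex"
  assumes pos: "\<And>n. \<beta> n > 0"
    and lim: "liminf (\<lambda>n. ereal (root n (\<beta> n))) \<ge> 1"
    and t: "0 \<le> t" "t < 1" and g: "in_H2 \<beta> g" and s: "s > 0"
  shows "norm (\<Sum>n. g n * of_real t ^ n) \<le> (s * (H2_norm \<beta> g)\<^sup>2 + H2_kernel \<beta> t / s) / 2"
proof -
  have bound: "norm (g n * of_real t ^ n) \<le>
      (s * ((norm (g n))\<^sup>2 * \<beta> n) + t ^ (2*n) / \<beta> n / s) / 2" for n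
  proof -
    have "norm (g n * of_real t ^ n) = norm (g n) * t ^ n"
      using t by (simp add: norm_mult norm_power)
    also have "\<dots> \<le> ((s * \<beta> n) * (norm (g n))\<^sup>2 + (t ^ n)\<^sup>2 / (s * \<beta> n)) / 2"
      using mult_le_scaled_squares[of "s * \<beta> n" "norm (g n)" "t ^ n"] s pos[of n] by simp
    also have "\<dots> = (s * ((norm (g n))\<^sup>2 * \<beta> n) + t ^ (2*n) / \<beta> n / s) / 2"
      unfolding power_even_eq using s pos[of n] by (simp add: field_simps)
    finally show ?thesis .
  qed
  have sums: "(\<lambda>n. (s * ((norm (g n))\<^sup>2 * \<beta> n) + t ^ (2*n) / \<beta> n / s) / 2) sums
      ((s * (H2_norm \<beta> g)\<^sup>2 + H2_kernel \<beta> t / s) / 2)"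
    unfolding H2_norm_square[OF pos g] H2_kernel_def
    using g summable_H2_kernel[OF pos lim t] unfolding in_H2_def
    by (intro sums_divide sums_add sums_mult summable_sums) auto
  show ?thesis
    using norm_suminf_le[OF bound sums_summable[OF sums]] sums_unique[OF sums] by simp
qed

lemma comp_op_poly_sums:
  fixes a z :: complex and c :: "nat \<Rightarrow> complex"
  assumes a: "norm a < 1" and z: "norm z < 1" and c: "\<And>k. L \<le> k \<Longrightarrow> c k = 0"
  shows "(\<lambda>n. comp_op a c n * z ^ n) sums (\<Sum>k<L. c k * T a z ^ k)"
proof -
  have pf: "power_fun c = (\<lambda>w. \<Sum>k<L. c k * w ^ k)"
    unfolding power_fun_def using c by (intro ext suminf_finite) (auto simp: not_less)
  have "1 + cnj a * w \<noteq> 0" if "w \<in> ball 0 1" for w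
  proof -
    have "norm a * norm w < 1"
      using a that by (smt (verit) mem_ball_0 mult_left_le_one_le norm_ge_zero)
    hence "norm (cnj a * w) \<noteq> norm (-1 :: complex)" by (simp add: norm_mult)
    thus ?thesis by (metis add_eq_0_iff)
  qed
  hence "(power_fun c \<circ> T a) holomorphic_on ball 0 1"
    unfolding pf T_def o_def by (intro holomorphic_intros) auto
  from holomorphic_power_series[OF this, of z] z show ?thesis
    by (simp add: comp_op_def taylor_coeffs_def pf)
qed

lemma real_disk_automorphism_bounds:
  fixes a s :: real
  assumes a: "0 < a" "a < 1" and s: "0 \<le> s" "s < 1"
  shows "0 \<le> (a + s) / (1 + a * s)" and "(a + s) / (1 + a * s) < 1"
    and "1 - (a + s) / (1 + a * s) \<le> (1 - a) * (1 - s)"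
proof -
  have den: "1 \<le> 1 + a * s" using a s by simp
  hence den_pos: "0 < 1 + a * s" by linarith
  have gap: "1 - (a + s) / (1 + a * s) = (1 - a) * (1 - s) / (1 + a * s)"
    using den by (simp add: field_simps)
  have "0 < (1 - a) * (1 - s) / (1 + a * s)" using a s den_pos by simp
  moreover have "(1 - a) * (1 - s) / (1 + a * s) \<le> (1 - a) * (1 - s) / 1"
    using a s den den_pos by (intro divide_left_mono) auto
  ultimately show "(a + s) / (1 + a * s) < 1" "1 - (a + s) / (1 + a * s) \<le> (1 - a) * (1 - s)"
    using gap by linarith+
  show "0 \<le> (a + s) / (1 + a * s)" using a s den_pos by simp
qed

text \<open>\<open>C\<^sub>T\<^sub>a\<close> sends the kernel at \<open>v = T\<^sub>a t\<close>, truncated at degree \<open>L\<close>, to a function whose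
  value at \<open>t\<close> equals the squared norm \<open>P = \<Sum>\<^sub>k\<^sub><\<^sub>L v\<^sup>2\<^sup>k / \<beta>\<^sub>k\<close> of the truncation;
  point evaluation at \<open>t\<close> then bounds \<open>P\<close> by \<open>M\<^sup>2 \<Phi>(t)\<close>.\<close>

lemma partial_H2_kernel_comp_le:
  fixes \<beta> :: "nat \<Rightarrow> real" and a :: real
  assumes pos: "\<And>n. \<beta> n > 0"
    and lim: "liminf (\<lambda>n. ereal (root n (\<beta> n))) \<ge> 1"
    and a: "0 < a" "a < 1" and M: "M \<ge> 1"
    and bdd: "\<And>c. in_H2 \<beta> c \<Longrightarrow> in_H2 \<beta> (comp_op (complex_of_real a) c) \<and>
      H2_norm \<beta> (comp_op (complex_of_real a) c) \<le> M * H2_norm \<beta> c"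
    and t: "0 \<le> t" "t < 1" and v: "v = (a + t) / (1 + a * t)"
  shows "(\<Sum>k<L. v ^ (2*k) / \<beta> k) \<le> M\<^sup>2 * H2_kernel \<beta> t"
proof -
  define c where "c = (\<lambda>k. if k < L then complex_of_real (v ^ k / \<beta> k) else 0)"
  define P where "P = (\<Sum>k<L. v ^ (2*k) / \<beta> k)"
  define g where "g = comp_op (complex_of_real a) c"
  have c: "in_H2 \<beta> c" unfolding in_H2_def
    by (rule summable_finite[of "{..<L}"]) (auto simp: c_def)
  have "(norm (c k))\<^sup>2 * \<beta> k = v ^ (2*k) / \<beta> k" if "k < L" for k
  proof -
    have "(norm (c k))\<^sup>2 = (v ^ k / \<beta> k)\<^sup>2"
      using that by (simp only: c_def if_True norm_of_real power2_abs)
    thus ?thesis using pos[of k] by (simp add: power_even_eq power2_eq_square)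
  qed
  hence c_norm: "(H2_norm \<beta> c)\<^sup>2 = P"
    unfolding H2_norm_square[OF pos c] P_def
    by (subst suminf_finite[of "{..<L}"]) (auto simp: c_def)
  have g: "in_H2 \<beta> g" and "H2_norm \<beta> g \<le> M * H2_norm \<beta> c"
    using bdd[OF c] unfolding g_def by auto
  hence "(H2_norm \<beta> g)\<^sup>2 \<le> (M * H2_norm \<beta> c)\<^sup>2"
    using H2_norm_nonneg[OF pos g] by (intro power_mono) auto
  hence g_norm: "(H2_norm \<beta> g)\<^sup>2 \<le> M\<^sup>2 * P"
    unfolding c_norm[symmetric] by (simp add: power_mult_distrib)
  have "T (complex_of_real a) (complex_of_real t) = complex_of_real v"
    unfolding T_def v by simp
  moreover have "(\<Sum>k<L. c k * complex_of_real v ^ k) = complex_of_real P"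
    unfolding P_def of_real_sum by (intro sum.cong) (auto simp: c_def mult_2 power_add)
  ultimately have "(\<lambda>n. g n * complex_of_real t ^ n) sums complex_of_real P"
    using comp_op_poly_sums[of "complex_of_real a" "complex_of_real t" L c] a t
    unfolding g_def by (auto simp: c_def)
  hence "P \<le> ((1/M\<^sup>2) * (H2_norm \<beta> g)\<^sup>2 + H2_kernel \<beta> t / (1/M\<^sup>2)) / 2"
    using norm_point_eval_le[OF pos lim t g, of "1/M\<^sup>2"] M by (simp add: sums_iff)
  also have "\<dots> \<le> (P + M\<^sup>2 * H2_kernel \<beta> t) / 2"
    using g_norm M by (simp add: pos_divide_le_eq mult.commute)
  finally show ?thesis unfolding P_def by simp
qed

lemma H2_kernel_comp_le:
  fixes \<beta> :: "nat \<Rightarrow> real" and a :: real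
  assumes pos: "\<And>n. \<beta> n > 0"
    and lim: "liminf (\<lambda>n. ereal (root n (\<beta> n))) \<ge> 1"
    and a: "0 < a" "a < 1"
    and bdd: "bounded_comp_op \<beta> (complex_of_real a)"
  shows "\<exists>Q\<ge>1. \<forall>t. 0 \<le> t \<longrightarrow> t < 1 \<longrightarrow>
           H2_kernel \<beta> ((a + t) / (1 + a * t)) \<le> Q * H2_kernel \<beta> t"
proof -
  obtain M where M: "\<And>c. in_H2 \<beta> c \<Longrightarrow> in_H2 \<beta> (comp_op (complex_of_real a) c) \<and>
      H2_norm \<beta> (comp_op (complex_of_real a) c) \<le> M * H2_norm \<beta> c"
    using bdd unfolding bounded_comp_op_def by blast
  have M': "in_H2 \<beta> (comp_op (complex_of_real a) c) \<and>
      H2_norm \<beta> (comp_op (complex_of_real a) c) \<le> max M 1 * H2_norm \<beta> c" if "in_H2 \<beta> c" for c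
    using M[OF that] H2_norm_nonneg[OF pos that] mult_right_mono[of M "max M 1" "H2_norm \<beta> c"]
    by auto
  have "H2_kernel \<beta> ((a + t) / (1 + a * t)) \<le> (max M 1)\<^sup>2 * H2_kernel \<beta> t"
    if t: "0 \<le> t" "t < 1" for t
    unfolding H2_kernel_def[of \<beta> "(a + t) / (1 + a * t)"]
    using real_disk_automorphism_bounds[OF a t] partial_H2_kernel_comp_le[OF pos lim a _ M' t refl]
    by (intro suminf_le_const summable_H2_kernel[OF pos lim]) auto
  moreover have "(max M 1)\<^sup>2 \<ge> 1" by (simp add: one_le_power)
  ultimately show ?thesis by blast
qed

lemma iterate_toward_one:
  fixes f \<Phi> :: "real \<Rightarrow> real"
  assumes maps: "\<And>s. 0 \<le> s \<Longrightarrow> s < 1 \<Longrightarrow> 0 \<le> f s \<and> f s < 1 \<and> 1 - f s \<le> r * (1 - s)"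
    and step: "\<And>s. 0 \<le> s \<Longrightarrow> s < 1 \<Longrightarrow> \<Phi> (f s) \<le> Q * \<Phi> s"
    and mono: "\<And>s u. 0 \<le> s \<Longrightarrow> s \<le> u \<Longrightarrow> u < 1 \<Longrightarrow> \<Phi> s \<le> \<Phi> u"
    and r: "0 \<le> r" "r \<le> 1" and Q: "0 \<le> Q" and t: "0 \<le> t" "t < 1"
  shows "\<Phi> (1 - r ^ j * (1 - t)) \<le> Q ^ j * \<Phi> t"
proof -
  have iter: "0 \<le> (f ^^ j) t \<and> (f ^^ j) t < 1 \<and> 1 - (f ^^ j) t \<le> r ^ j * (1 - t) \<and>
      \<Phi> ((f ^^ j) t) \<le> Q ^ j * \<Phi> t"
  proof (induction j)
    case 0
    thus ?case using t by simp
  next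
    case (Suc j)
    define s where "s = (f ^^ j) t"
    have s: "0 \<le> s" "s < 1" "1 - s \<le> r ^ j * (1 - t)" "\<Phi> s \<le> Q ^ j * \<Phi> t"
      using Suc.IH unfolding s_def by auto
    have "1 - f s \<le> r * (1 - s)" using maps[OF s(1,2)] by blast
    also have "\<dots> \<le> r * (r ^ j * (1 - t))" using s(3) r by (intro mult_left_mono) auto
    finally have gap: "1 - f s \<le> r ^ Suc j * (1 - t)" by (simp add: mult.assoc)
    have "\<Phi> (f s) \<le> Q * \<Phi> s" by (rule step[OF s(1,2)])
    also have "\<dots> \<le> Q * (Q ^ j * \<Phi> t)" using s(4) Q by (intro mult_left_mono) auto
    finally have "\<Phi> (f s) \<le> Q ^ Suc j * \<Phi> t" by (simp add: mult.assoc)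
    with gap maps[OF s(1,2)] show ?case by (simp add: s_def)
  qed
  have "r ^ j * (1 - t) \<le> 1" using r t by (simp add: mult_le_one power_le_one)
  hence "\<Phi> (1 - r ^ j * (1 - t)) \<le> \<Phi> ((f ^^ j) t)" using iter by (intro mono) auto
  thus ?thesis using iter by linarith
qed

lemma ex_power_small_times_log:
  fixes r Q :: real
  assumes r: "0 < r" "r < 1" and Q: "Q \<ge> 1"
  shows "\<exists>j. r ^ j \<le> 1/2 \<and> r ^ j * ln (2 * Q ^ j) \<le> 1/16"
proof -
  have r0: "(\<lambda>j. r ^ j) \<longlonglongrightarrow> 0" using r by (intro LIMSEQ_power_zero) auto
  have "(\<lambda>j. r ^ j * ln 2 + (real j * r ^ j) * ln Q) \<longlonglongrightarrow> 0"
    using r0 powser_times_n_limit_0[of r] r by (intro tendsto_add_zero tendsto_mult_left_zero) auto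
  moreover have "r ^ j * ln (2 * Q ^ j) = r ^ j * ln 2 + (real j * r ^ j) * ln Q" for j
    using Q by (simp add: ln_mult ln_realpow algebra_simps)
  ultimately have "(\<lambda>j. r ^ j * ln (2 * Q ^ j)) \<longlonglongrightarrow> 0" by simp
  hence "eventually (\<lambda>j. r ^ j * ln (2 * Q ^ j) < 1/16) sequentially"
    by (rule order_tendstoD) simp
  moreover have "eventually (\<lambda>j. r ^ j < 1/2) sequentially"
    using r0 by (rule order_tendstoD) simp
  ultimately have "eventually (\<lambda>j. r ^ j < 1/2 \<and> r ^ j * ln (2 * Q ^ j) < 1/16) sequentially"
    by eventually_elim auto
  then obtain N where "\<And>j. N \<le> j \<Longrightarrow> r ^ j < 1/2 \<and> r ^ j * ln (2 * Q ^ j) < 1/16"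
    unfolding eventually_sequentially by blast
  thus ?thesis by (meson less_imp_le order_refl)
qed

lemma near_one_power_bounds:
  fixes L \<rho> :: real and n :: nat
  assumes L: "0 < L" "L \<le> real n" and \<rho>: "0 < \<rho>" "\<rho> \<le> 1/2" "\<rho> * L \<le> 1/16"
  shows "1/2 \<le> (1 - \<rho> * L / n) ^ (8*n)"
    and "((1 - L / n) / (1 - \<rho> * L / n)) ^ (2*n) \<le> exp (- L)"
proof -
  have "n \<noteq> 0" using L by auto
  hence n: "real n \<ge> 1" by simp
  have "\<rho> * L / n \<le> \<rho> * L / 1" using \<rho> L n by (intro divide_left_mono) auto
  hence small: "\<rho> * L / n \<le> 1/16" using \<rho> by linarith
  have "1 + real (8*n) * (- (\<rho> * L / n)) \<le> (1 + - (\<rho> * L / n)) ^ (8*n)"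
    by (rule Bernoulli_inequality) (use small in linarith)
  moreover have "real (8*n) * (- (\<rho> * L / n)) = - 8 * (\<rho> * L)" using n by simp
  ultimately show "1/2 \<le> (1 - \<rho> * L / n) ^ (8*n)" using \<rho> by simp
  define t where "t = 1 - L / n"
  define y where "y = 1 - \<rho> * L / n"
  have t: "0 \<le> t" unfolding t_def using L n by (simp add: field_simps)
  have "0 \<le> \<rho> * L / n" using \<rho> L by simp
  hence y: "0 < y" "y \<le> 1" unfolding y_def using small by linarith+
  have gap: "y - t = (1 - \<rho>) * L / n" unfolding y_def t_def by (simp add: diff_divide_distrib algebra_simps)
  hence gap0: "0 \<le> y - t" using \<rho> L n by simp
  have "t / y = 1 - (y - t) / y" using y by (simp add: field_simps)
  also have "\<dots> \<le> 1 - (y - t)"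
  proof -
    have "(y - t) * y \<le> y - t" using y gap0 by (intro mult_left_le) auto
    hence "y - t \<le> (y - t) / y" using y by (simp add: le_divide_eq)
    thus ?thesis by linarith
  qed
  also have "\<dots> \<le> exp (- (y - t))" using exp_ge_add_one_self[of "- (y - t)"] by linarith
  finally have "(t / y) ^ (2*n) \<le> exp (- (y - t)) ^ (2*n)" using t y by (intro power_mono) auto
  also have "\<dots> = exp (- (2 * (1 - \<rho>) * L))"
    unfolding exp_of_nat_mult[symmetric] gap using n by simp
  also have "\<dots> \<le> exp (- L)" using \<rho> L by (simp add: algebra_simps)
  finally show "((1 - L / n) / (1 - \<rho> * L / n)) ^ (2*n) \<le> exp (- L)" by (simp add: t_def y_def)
qed

lemma H2_kernel_ge_block:
  fixes \<beta> :: "nat \<Rightarrow> real"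
  assumes pos: "\<And>n. \<beta> n > 0"
    and lim: "liminf (\<lambda>n. ereal (root n (\<beta> n))) \<ge> 1"
    and C: "0 < C" "\<And>m n. n \<le> m \<Longrightarrow> \<beta> m \<le> C * \<beta> n"
    and y: "0 \<le> y" "y < 1" "1/2 \<le> y ^ (8*n)"
  shows "real n / (C * \<beta> (2*n)) \<le> H2_kernel \<beta> y"
proof -
  have "real n / (C * \<beta> (2*n)) = (\<Sum>k\<in>{2*n..<4*n}. (1/2) / (C * \<beta> (2*n)))" by simp
  also have "\<dots> \<le> (\<Sum>k\<in>{2*n..<4*n}. y ^ (2*k) / \<beta> k)"
  proof (rule sum_mono)
    fix k assume k: "k \<in> {2*n..<4*n}"
    have "y ^ (8*n) \<le> y ^ (2*k)" using y k by (intro power_decreasing) auto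
    hence "1/2 \<le> y ^ (2*k)" using y by linarith
    moreover have "\<beta> k \<le> C * \<beta> (2*n)" using C(2) k by simp
    ultimately show "(1/2) / (C * \<beta> (2*n)) \<le> y ^ (2*k) / \<beta> k"
      using C(1) pos[of k] by (intro frac_le) auto
  qed
  also have "\<dots> \<le> H2_kernel \<beta> y" unfolding H2_kernel_def
    using summable_H2_kernel[OF pos lim y(1,2)] pos y
    by (intro sum_le_suminf) (auto simp: less_imp_le)
  finally show ?thesis .
qed

lemma initial_kernel_sum_le:
  fixes \<beta> :: "nat \<Rightarrow> real"
  assumes pos: "\<And>n. \<beta> n > 0" and C: "\<And>m n. n \<le> m \<Longrightarrow> \<beta> m \<le> C * \<beta> n"
    and t: "0 \<le> t" "t \<le> 1"
  shows "(\<Sum>k<n. t ^ (2*k) / \<beta> k) \<le> real n * C / \<beta> n"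
proof -
  have "(\<Sum>k<n. t ^ (2*k) / \<beta> k) \<le> (\<Sum>k<n. C / \<beta> n)"
  proof (rule sum_mono)
    fix k assume "k \<in> {..<n}"
    hence "\<beta> n \<le> C * \<beta> k" using C by simp
    hence "1 / \<beta> k \<le> C / \<beta> n" using pos[of k] pos[of n] by (simp add: field_simps)
    moreover have "t ^ (2*k) / \<beta> k \<le> 1 / \<beta> k"
      using t pos[of k] by (intro divide_right_mono power_le_one) auto
    ultimately show "t ^ (2*k) / \<beta> k \<le> C / \<beta> n" by linarith
  qed
  thus ?thesis by simp
qed

lemma H2_kernel_le_initial_plus_tail:
  fixes \<beta> :: "nat \<Rightarrow> real"
  assumes pos: "\<And>n. \<beta> n > 0"
    and lim: "liminf (\<lambda>n. ereal (root n (\<beta> n))) \<ge> 1"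
    and t: "0 \<le> t" "t \<le> y" and y: "0 < y" "y < 1"
  shows "H2_kernel \<beta> t \<le> (\<Sum>k<n. t ^ (2*k) / \<beta> k) + (t / y) ^ (2*n) * H2_kernel \<beta> y"
proof -
  define q where "q = (t / y) ^ (2*n)"
  have q0: "0 \<le> q" unfolding q_def using t y by simp
  have sum_t: "summable (\<lambda>k. t ^ (2*k) / \<beta> k)" using summable_H2_kernel[OF pos lim] t y by simp
  have sum_y: "summable (\<lambda>k. y ^ (2*k) / \<beta> k)" using summable_H2_kernel[OF pos lim] y by simp
  have tail_y: "summable (\<lambda>k. y ^ (2*(k+n)) / \<beta> (k+n))"
    using summable_ignore_initial_segment[OF sum_y, of n] by simp
  have "(\<Sum>k. t ^ (2*(k+n)) / \<beta> (k+n)) \<le> (\<Sum>k. q * (y ^ (2*(k+n)) / \<beta> (k+n)))"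
  proof (rule suminf_le)
    fix k
    have "t ^ (2*(k+n)) = t ^ (2*n) * t ^ (2*k)" by (simp add: algebra_simps power_add)
    also have "\<dots> \<le> t ^ (2*n) * y ^ (2*k)" using t by (intro mult_left_mono power_mono) auto
    also have "\<dots> = q * y ^ (2*(k+n))" unfolding q_def using y
      by (simp add: power_divide algebra_simps power_add)
    finally show "t ^ (2*(k+n)) / \<beta> (k+n) \<le> q * (y ^ (2*(k+n)) / \<beta> (k+n))"
      using pos[of "k+n"] by (simp add: divide_right_mono)
  qed (use summable_ignore_initial_segment[OF sum_t, of n] summable_mult[OF tail_y] in simp_all)
  also have "\<dots> = q * (\<Sum>k. y ^ (2*(k+n)) / \<beta> (k+n))" by (rule suminf_mult[OF tail_y])
  also have "\<dots> \<le> q * H2_kernel \<beta> y"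
  proof (rule mult_left_mono[OF _ q0])
    have "0 \<le> (\<Sum>k<n. y ^ (2*k) / \<beta> k)" using y pos by (intro sum_nonneg) (simp add: less_imp_le)
    thus "(\<Sum>k. y ^ (2*(k+n)) / \<beta> (k+n)) \<le> H2_kernel \<beta> y"
      unfolding H2_kernel_def suminf_split_initial_segment[OF sum_y, of n] by simp
  qed
  finally show ?thesis
    unfolding H2_kernel_def suminf_split_initial_segment[OF sum_t, of n] q_def by simp
qed

lemma weight_le_double_index:
  fixes \<beta> :: "nat \<Rightarrow> real"
  assumes pos: "\<And>n. \<beta> n > 0"
    and lim: "liminf (\<lambda>n. ereal (root n (\<beta> n))) \<ge> 1"
    and C: "0 < C" "\<And>m n. n \<le> m \<Longrightarrow> \<beta> m \<le> C * \<beta> n"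
    and Q: "1 \<le> Q" and \<rho>: "0 < \<rho>" "\<rho> \<le> 1/2" "\<rho> * ln (2 * Q) \<le> 1/16"
    and hyp: "\<And>t. 0 \<le> t \<Longrightarrow> t < 1 \<Longrightarrow> H2_kernel \<beta> (1 - \<rho> * (1 - t)) \<le> Q * H2_kernel \<beta> t"
    and n: "ln (2 * Q) \<le> real n"
  shows "\<beta> n \<le> 2 * Q * C\<^sup>2 * \<beta> (2*n)"
proof -
  define L where "L = ln (2 * Q)"
  define t where "t = 1 - L / n"
  define y where "y = 1 - \<rho> * L / n"
  have L: "0 < L" "L \<le> real n" unfolding L_def using Q n by auto
  hence n0: "0 < real n" by linarith
  have t: "0 \<le> t" "t < 1" unfolding t_def using L n0 by (auto simp: field_simps)
  have yt: "y = 1 - \<rho> * (1 - t)" unfolding y_def t_def by simp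
  have "\<rho> * (1 - t) \<le> 1 - t" using \<rho> t by (intro mult_left_le_one_le) auto
  hence t_le_y: "t \<le> y" unfolding yt by linarith
  have "0 < \<rho> * L / n" using \<rho> L n0 by simp
  hence "y < 1" unfolding y_def by linarith
  moreover have "\<rho> * (1 - t) \<le> \<rho>" using \<rho> t by (intro mult_left_le) auto
  ultimately have y: "0 < y" "y < 1" unfolding yt using \<rho> by linarith+
  have y_le: "H2_kernel \<beta> y \<le> Q * H2_kernel \<beta> t" unfolding yt by (rule hyp[OF t])
  have low: "real n / (C * \<beta> (2*n)) \<le> H2_kernel \<beta> y"
    using near_one_power_bounds(1)[OF L \<rho>(1,2)] \<rho>(3) y
    by (intro H2_kernel_ge_block[OF pos lim C]) (auto simp: y_def L_def)
  have "(t / y) ^ (2*n) \<le> 1 / (2 * Q)"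
    using near_one_power_bounds(2)[OF L \<rho>(1,2)] \<rho>(3) Q
    by (simp add: t_def y_def L_def exp_minus inverse_eq_divide)
  hence "(t / y) ^ (2*n) * H2_kernel \<beta> y \<le> 1 / (2 * Q) * (Q * H2_kernel \<beta> t)"
    using y_le H2_kernel_nonneg[OF pos lim] y Q by (intro mult_mono) auto
  also have "\<dots> = H2_kernel \<beta> t / 2" using Q by simp
  finally have "H2_kernel \<beta> t \<le> 2 * (\<Sum>k<n. t ^ (2*k) / \<beta> k)"
    using H2_kernel_le_initial_plus_tail[OF pos lim t(1) t_le_y y, of n] by linarith
  also have "\<dots> \<le> 2 * (real n * C / \<beta> n)"
    using initial_kernel_sum_le[of \<beta> C t n, OF pos C(2) t(1) less_imp_le[OF t(2)]] by simp
  finally have "Q * H2_kernel \<beta> t \<le> Q * (2 * (real n * C / \<beta> n))"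
    using Q by (intro mult_left_mono) auto
  hence "real n / (C * \<beta> (2*n)) \<le> Q * (2 * (real n * C / \<beta> n))"
    using low y_le by linarith
  hence "real n * \<beta> n \<le> real n * (2 * Q * C\<^sup>2 * \<beta> (2*n))"
    using C(1) pos[of n] pos[of "2*n"] by (simp add: field_simps power2_eq_square)
  thus ?thesis using n0 by simp
qed

lemma Delta2_if_eventually_le_double:
  fixes \<beta> :: "nat \<Rightarrow> real"
  assumes pos: "\<And>n. \<beta> n > 0" and D: "0 < D" and le: "\<And>n. N \<le> n \<Longrightarrow> \<beta> n \<le> D * \<beta> (2*n)"
  shows "Delta2 \<beta>"
proof -
  define R where "R = insert 1 ((\<lambda>n. \<beta> (2*n) / \<beta> n) ` {..<N})"
  define \<delta> where "\<delta> = min (min (Min R) (1/D)) (1/2)"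
  have "0 < Min R" unfolding R_def using pos by (subst Min_gr_iff) auto
  hence \<delta>: "0 < \<delta>" "\<delta> < 1" unfolding \<delta>_def using D by auto
  have "\<delta> * \<beta> n \<le> \<beta> (2*n)" for n
  proof (cases "n < N")
    case True
    hence "\<delta> \<le> \<beta> (2*n) / \<beta> n" unfolding \<delta>_def R_def by (auto intro: Min_le min.coboundedI1)
    thus ?thesis using pos[of n] by (simp add: le_divide_eq)
  next
    case False
    have "\<delta> * \<beta> n \<le> (1/D) * \<beta> n" unfolding \<delta>_def using pos[of n] by (intro mult_right_mono) auto
    also have "\<dots> \<le> \<beta> (2*n)" using le[of n] False D by (simp add: divide_le_eq mult.commute)
    finally show ?thesis .
  qed
  thus ?thesis unfolding Delta2_def using \<delta> by blast
qed

theorem mainTheorem12: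
  fixes \<beta> :: "nat \<Rightarrow> real" and a :: real
  assumes pos: "\<And>n. \<beta> n > 0"
    and ess: "ess_decreasing \<beta>"
    and lim: "liminf (\<lambda>n. ereal (root n (\<beta> n))) \<ge> 1"
    and a: "0 < a" "a < 1"
    and bdd: "bounded_comp_op \<beta> (complex_of_real a)"
  shows "Delta2 \<beta>"
proof -
  obtain C where C: "C \<ge> 1" "\<And>m n. n \<le> m \<Longrightarrow> \<beta> m \<le> C * \<beta> n"
    using ess unfolding ess_decreasing_def by blast
  obtain Q where Q: "Q \<ge> 1"
    and step: "\<And>t. 0 \<le> t \<Longrightarrow> t < 1 \<Longrightarrow> H2_kernel \<beta> ((a + t) / (1 + a * t)) \<le> Q * H2_kernel \<beta> t"
    using H2_kernel_comp_le[OF pos lim a bdd] by blast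
  obtain j where j: "(1 - a) ^ j \<le> 1/2" "(1 - a) ^ j * ln (2 * Q ^ j) \<le> 1/16"
    using ex_power_small_times_log[of "1 - a" Q] a Q by auto
  have iter: "H2_kernel \<beta> (1 - (1 - a) ^ j * (1 - t)) \<le> Q ^ j * H2_kernel \<beta> t"
    if "0 \<le> t" "t < 1" for t
    using real_disk_automorphism_bounds[OF a] step H2_kernel_mono[OF pos lim] a Q that
    by (intro iterate_toward_one[where f = "\<lambda>s. (a + s) / (1 + a * s)"]) auto
  have "\<beta> n \<le> 2 * Q ^ j * C\<^sup>2 * \<beta> (2*n)" if "ln (2 * Q ^ j) \<le> real n" for n
    using that C a j Q iter
    by (intro weight_le_double_index[OF pos lim, where \<rho> = "(1 - a) ^ j"])
       (auto simp: one_le_power)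
  then show ?thesis
    using Q C by (intro Delta2_if_eventually_le_double[OF pos, of _ "nat \<lceil>ln (2 * Q ^ j)\<rceil>"]) auto
qed

end
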